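(* Let $d\ge3$ and let $X,Y\in M_d(\mathbb{C})$ be diagonal matrices. Then the matrix $H(X,Y)$ is positive semidefinite, where $H(X,Y)$ is the hermitian matrix of order $2d^2$ given by $H=H_1-\tfrac12(H_2+H_3)+\tfrac14H_4$ with $$H_1=\begin{bmatrix}\|X\|^2&\operatorname{tr}(X^\dagger Y)\\ \operatorname{tr}(Y^\dagger X)&\|Y\|^2\end{bmatrix}\otimes I_{d^2},\qquad H_2=\begin{bmatrix}X^\dagger X&X^\dagger Y\\ Y^\dagger X&Y^\dagger Y\end{bmatrix}\otimes I_d,$$ $$H_3=\begin{bmatrix}I_d\otimes X^*X^T&I_d\otimes X^*Y^T\\ I_d\otimes Y^*X^T&I_d\otimes Y^*Y^T\end{bmatrix},\qquad H_4=\begin{bmatrix}\tilde X^*\tilde X^T&\tilde X^*\tilde Y^T\\ \tilde Y^*\tilde X^T&\tilde Y^*\tilde Y^T\end{bmatrix}.$$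
   Context: $Z^*$ is the entrywise complex conjugate, $Z^T$ the transpose, $Z^\dagger$ the conjugate transpose, $\|Z\|^2=\operatorname{tr}(Z^\dagger Z)$, $I_m$ the identity matrix of order $m$, and $A\otimes B=[a_{ij}B]$ for $A=[a_{ij}]$. For a matrix $Z$, $\tilde Z$ is the column vector obtained by stacking the columns of $Z$ one below the other, starting with the first. *)

theory Defs
  imports "Jordan_Normal_Form.Matrix"
begin

definition cconj :: "complex mat \<Rightarrow> complex mat" where
  "cconj Z = map_mat cnj Z"

definition adj :: "complex mat \<Rightarrow> complex mat" where
  "adj Z = transpose_mat (cconj Z)"

definition trace :: "complex mat \<Rightarrow> complex" where
  "trace A = (\<Sum>i<dim_row A. A $$ (i, i))"

definition frob_sq :: "complex mat \<Rightarrow> complex" where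
  "frob_sq Z = trace (adj Z * Z)"

definition kron :: "complex mat \<Rightarrow> complex mat \<Rightarrow> complex mat" where
  "kron A B = mat (dim_row A * dim_row B) (dim_col A * dim_col B)
     (\<lambda>(i, j). A $$ (i div dim_row B, j div dim_col B) * B $$ (i mod dim_row B, j mod dim_col B))"

(* vec Z: stack the columns of Z, first column on top; result is an (mn) x 1 column matrix *)
definition stack :: "complex mat \<Rightarrow> complex mat" where
  "stack Z = mat (dim_row Z * dim_col Z) 1 (\<lambda>(i, _). Z $$ (i mod dim_row Z, i div dim_row Z))"

definition blk :: "complex mat \<Rightarrow> complex mat \<Rightarrow> complex mat \<Rightarrow> complex mat \<Rightarrow> complex mat" where
  "blk A B C D = four_block_mat A B C D"

definition mat2 :: "complex \<Rightarrow> complex \<Rightarrow> complex \<Rightarrow> complex \<Rightarrow> complex mat" where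
  "mat2 a b c e = mat 2 2 (\<lambda>(i, j). if i = 0 then (if j = 0 then a else b) else (if j = 0 then c else e))"

definition psd :: "complex mat \<Rightarrow> bool" where
  "psd A \<longleftrightarrow> (\<exists>n. A \<in> carrier_mat n n \<and> adj A = A \<and>
     (\<forall>v \<in> carrier_vec n. 0 \<le> Re (map_vec cnj v \<bullet> (A *\<^sub>v v))))"

definition H1 :: "nat \<Rightarrow> complex mat \<Rightarrow> complex mat \<Rightarrow> complex mat" where
  "H1 d X Y = kron (mat2 (frob_sq X) (trace (adj X * Y)) (trace (adj Y * X)) (frob_sq Y)) (1\<^sub>m (d * d))"

definition H2 :: "nat \<Rightarrow> complex mat \<Rightarrow> complex mat \<Rightarrow> complex mat" where
  "H2 d X Y = kron (blk (adj X * X) (adj X * Y) (adj Y * X) (adj Y * Y)) (1\<^sub>m d)"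

definition H3 :: "nat \<Rightarrow> complex mat \<Rightarrow> complex mat \<Rightarrow> complex mat" where
  "H3 d X Y = blk (kron (1\<^sub>m d) (cconj X * transpose_mat X)) (kron (1\<^sub>m d) (cconj X * transpose_mat Y))
                  (kron (1\<^sub>m d) (cconj Y * transpose_mat X)) (kron (1\<^sub>m d) (cconj Y * transpose_mat Y))"

definition H4 :: "complex mat \<Rightarrow> complex mat \<Rightarrow> complex mat" where
  "H4 X Y = blk (cconj (stack X) * transpose_mat (stack X)) (cconj (stack X) * transpose_mat (stack Y))
                (cconj (stack Y) * transpose_mat (stack X)) (cconj (stack Y) * transpose_mat (stack Y))"

definition Hmat :: "nat \<Rightarrow> complex mat \<Rightarrow> complex mat \<Rightarrow> complex mat" where
  "Hmat d X Y = H1 d X Y - (1/2 :: complex) \<cdot>\<^sub>m (H2 d X Y + H3 d X Y) + (1/4 :: complex) \<cdot>\<^sub>m H4 X Y"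

end

theory Submission
  imports Defs
begin

text \<open>Index the rows and columns of H by I = a d^2 + r, where a \<in> {0, 1} selects Z_0 = X or
  Z_1 = Y and r = p + d q is the position of the entry (p, q) in the vectorisation. For diagonal
  X and Y every summand is explicit: with c_k = conj((Z_a)_kk) (Z_b)_kk, the (I, J) entries of
  H1, H2, H3 are [r = r'] times sum_k c_k, c_q and c_p respectively, and H4 is the rank one matrix
  of the stacked vector h = (vec X, vec Y). Hence
    H = sum_{k,r} w_kr conj(g_kr) g_kr^T + 1/4 conj(h) h^T,
  where g_kr(a d^2 + r') = [r = r'] (Z_a)_kk and w_kr = 1 - [k = q]/2 - [k = p]/2 \<ge> 0,
  a nonnegative combination of Gram matrices.\<close>

lemma dim_kron [simp]:
  "dim_row (kron A B) = dim_row A * dim_row B"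
  "dim_col (kron A B) = dim_col A * dim_col B"
  unfolding kron_def by simp_all

lemma kron_carrier_mat:
  "A \<in> carrier_mat m n \<Longrightarrow> B \<in> carrier_mat p q \<Longrightarrow> kron A B \<in> carrier_mat (m * p) (n * q)"
  by (intro carrier_matI) auto

lemma index_kron:
  assumes "I < dim_row A * dim_row B" "J < dim_col A * dim_col B"
  shows "kron A B $$ (I, J) =
    A $$ (I div dim_row B, J div dim_col B) * B $$ (I mod dim_row B, J mod dim_col B)"
  using assms unfolding kron_def by simp

lemma cconj_carrier_mat [simp]: "cconj A \<in> carrier_mat m n \<longleftrightarrow> A \<in> carrier_mat m n"
  by (simp add: cconj_def)

lemma adj_carrier_mat [simp]: "adj A \<in> carrier_mat n m \<longleftrightarrow> A \<in> carrier_mat m n"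
  by (simp add: adj_def)

text \<open>\<open>sel X Y a\<close> is Z_a above, so that the (a, b) blocks of H2, H3, H4 are uniform in a and b.\<close>

definition sel :: "complex mat \<Rightarrow> complex mat \<Rightarrow> nat \<Rightarrow> complex mat" where
  "sel X Y a = (if a = 0 then X else Y)"

lemma dim_mat2 [simp]: "dim_row (mat2 a b c e) = 2" "dim_col (mat2 a b c e) = 2"
  by (simp_all add: mat2_def)

lemma index_mat2_sel:
  assumes "a < 2" "b < 2"
  shows "mat2 (h X X) (h X Y) (h Y X) (h Y Y) $$ (a, b) = h (sel X Y a) (sel X Y b)"
  using assms by (auto simp: mat2_def sel_def less_2_cases_iff)

lemma blk_carrier_mat:
  assumes "A \<in> carrier_mat n n" "D \<in> carrier_mat n n"
  shows "blk A B C D \<in> carrier_mat (2 * n) (2 * n)"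
  using assms by (auto simp: blk_def)

lemma index_blk_sel:
  assumes G: "\<And>a b. G (sel X Y a) (sel X Y b) \<in> carrier_mat n n"
    and "I < 2 * n" "J < 2 * n"
  shows "blk (G X X) (G X Y) (G Y X) (G Y Y) $$ (I, J) =
    G (sel X Y (I div n)) (sel X Y (J div n)) $$ (I mod n, J mod n)"
proof -
  have blocks: "G X X \<in> carrier_mat n n" "G X Y \<in> carrier_mat n n"
       "G Y X \<in> carrier_mat n n" "G Y Y \<in> carrier_mat n n"
    using G[of 0 0] G[of 1 1] G[of 0 1] G[of 1 0] by (simp_all add: sel_def)
  have n: "n > 0"
    using assms by auto
  show ?thesis
    using assms(2,3) blocks n
    by (auto simp: blk_def sel_def div_eq_0_iff less_mult_imp_div_less le_div_geq le_mod_geq not_less)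
qed

lemma dim_stack [simp]: "dim_row (stack A) = dim_row A * dim_col A" "dim_col (stack A) = 1"
  by (simp_all add: stack_def)

lemma index_cconj_mult_transpose_col:
  assumes "dim_col u = 1" "dim_col w = 1" "I < dim_row u" "J < dim_row w"
  shows "(cconj u * transpose_mat w) $$ (I, J) = cnj (u $$ (I, 0)) * w $$ (J, 0)"
  using assms by (simp add: cconj_def scalar_prod_def)

lemma mod_square_div: "(I mod (d * d)) div d = (I div d) mod (d::nat)"
  by (cases "d = 0") (simp_all add: mod_mult2_eq mult.commute)

lemma mod_square_mod: "(I mod (d * d)) mod d = I mod (d::nat)"
  by (simp add: mod_mod_cancel)

lemma mod_square_eq_iff:
  "I mod (d * d) = J mod (d * d) \<longleftrightarrow> (I div d) mod d = (J div d) mod d \<and> I mod d = J mod (d::nat)"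
  by (metis mod_square_div mod_square_mod mod_mult2_eq)

definition diag_prod :: "complex mat \<Rightarrow> complex mat \<Rightarrow> nat \<Rightarrow> complex" where
  "diag_prod A B k = cnj (A $$ (k, k)) * B $$ (k, k)"

lemma diagonal_mat_off_diag:
  assumes "diagonal_mat A" "i < dim_row A" "j < dim_col A" "i \<noteq> j"
  shows "A $$ (i, j) = 0"
  using assms unfolding diagonal_mat_def by blast

lemma index_adj_mult_diagonal:
  assumes A: "A \<in> carrier_mat d d" "diagonal_mat A" and B: "B \<in> carrier_mat d d" "diagonal_mat B"
    and "p < d" "q < d"
  shows "(adj A * B) $$ (p, q) = (if p = q then diag_prod A B p else 0)"
proof -
  have "(adj A * B) $$ (p, q) = (\<Sum>l<d. cnj (A $$ (l, p)) * B $$ (l, q))"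
    using assms by (simp add: adj_def cconj_def scalar_prod_def lessThan_atLeast0)
  also have "\<dots> = (\<Sum>l<d. if l = p then cnj (A $$ (p, p)) * B $$ (p, q) else 0)"
    using assms by (intro sum.cong refl) (auto simp: diagonal_mat_off_diag)
  finally show ?thesis
    using assms by (auto simp: diag_prod_def diagonal_mat_off_diag)
qed

lemma index_cconj_mult_transpose_diagonal:
  assumes A: "A \<in> carrier_mat d d" "diagonal_mat A" and B: "B \<in> carrier_mat d d" "diagonal_mat B"
    and "p < d" "q < d"
  shows "(cconj A * transpose_mat B) $$ (p, q) = (if p = q then diag_prod A B p else 0)"
proof -
  have "(cconj A * transpose_mat B) $$ (p, q) = (\<Sum>l<d. cnj (A $$ (p, l)) * B $$ (q, l))"
    using assms by (simp add: cconj_def scalar_prod_def lessThan_atLeast0)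
  also have "\<dots> = (\<Sum>l<d. if l = p then cnj (A $$ (p, p)) * B $$ (q, p) else 0)"
    using assms by (intro sum.cong refl) (auto simp: diagonal_mat_off_diag)
  finally show ?thesis
    using assms by (auto simp: diag_prod_def diagonal_mat_off_diag)
qed

lemma trace_adj_mult_diagonal:
  assumes A: "A \<in> carrier_mat d d" "diagonal_mat A" and B: "B \<in> carrier_mat d d" "diagonal_mat B"
  shows "trace (adj A * B) = (\<Sum>k<d. diag_prod A B k)"
proof -
  have "(adj A * B) $$ (k, k) = diag_prod A B k" if "k < d" for k
    using index_adj_mult_diagonal[OF A B that that] by simp
  moreover have "dim_row (adj A * B) = d"
    using A by (simp add: adj_def cconj_def)
  ultimately show ?thesis
    unfolding trace_def by simp
qed

section \<open>Weighted Gram matrices are positive semidefinite\<close>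

lemma quadratic_form_weighted_gram:
  fixes A :: "complex mat" and c :: "'m \<Rightarrow> real" and g :: "'m \<Rightarrow> nat \<Rightarrow> complex"
  assumes A: "A \<in> carrier_mat n n" and v: "v \<in> carrier_vec n"
    and entries: "\<And>I J. I < n \<Longrightarrow> J < n \<Longrightarrow>
      A $$ (I, J) = (\<Sum>m\<in>M. of_real (c m) * (cnj (g m I) * g m J))"
  shows "map_vec cnj v \<bullet> (A *\<^sub>v v) =
    (\<Sum>m\<in>M. of_real (c m) * (cnj (\<Sum>J<n. g m J * v $ J) * (\<Sum>J<n. g m J * v $ J)))"
proof -
  have "map_vec cnj v \<bullet> (A *\<^sub>v v) = (\<Sum>I<n. \<Sum>J<n. cnj (v $ I) * A $$ (I, J) * v $ J)"
    using A v by (simp add: scalar_prod_def lessThan_atLeast0 sum_distrib_left mult.assoc)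
  also have "\<dots> = (\<Sum>I<n. \<Sum>J<n. \<Sum>m\<in>M. of_real (c m) * (cnj (g m I * v $ I) * (g m J * v $ J)))"
    by (intro sum.cong refl) (simp add: entries sum_distrib_left sum_distrib_right mult_ac)
  also have "\<dots> = (\<Sum>m\<in>M. of_real (c m) * (\<Sum>I<n. \<Sum>J<n. cnj (g m I * v $ I) * (g m J * v $ J)))"
    unfolding sum_distrib_left
    by (subst sum.swap, rule sum.cong[OF refl], rule sum.swap)
  also have "\<dots> = (\<Sum>m\<in>M. of_real (c m) * ((\<Sum>I<n. cnj (g m I * v $ I)) * (\<Sum>J<n. g m J * v $ J)))"
    by (simp add: sum_product)
  finally show ?thesis by simp
qed

lemma psd_weighted_gram:
  fixes A :: "complex mat" and c :: "'m \<Rightarrow> real" and g :: "'m \<Rightarrow> nat \<Rightarrow> complex"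
  assumes A: "A \<in> carrier_mat n n" and weights: "\<And>m. m \<in> M \<Longrightarrow> 0 \<le> c m"
    and entries: "\<And>I J. I < n \<Longrightarrow> J < n \<Longrightarrow>
      A $$ (I, J) = (\<Sum>m\<in>M. of_real (c m) * (cnj (g m I) * g m J))"
  shows "psd A"
proof -
  have "adj A = A"
  proof (rule eq_matI)
    fix I J assume "I < dim_row A" "J < dim_col A"
    then show "adj A $$ (I, J) = A $$ (I, J)"
      using A by (simp add: adj_def cconj_def entries mult.commute)
  qed (use A in \<open>simp_all add: adj_def cconj_def\<close>)
  moreover have "0 \<le> Re (map_vec cnj v \<bullet> (A *\<^sub>v v))" if v: "v \<in> carrier_vec n" for v
  proof -
    define s where "s m = (\<Sum>J<n. g m J * v $ J)" for m
    have "map_vec cnj v \<bullet> (A *\<^sub>v v) = (\<Sum>m\<in>M. of_real (c m) * (cnj (s m) * s m))"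
      unfolding s_def by (rule quadratic_form_weighted_gram[OF A v entries])
    then show ?thesis
      by (simp add: Re_sum weights sum_nonneg)
  qed
  ultimately show ?thesis
    unfolding psd_def using A by blast
qed

section \<open>A Gram decomposition of H(X,Y)\<close>

text \<open>\<open>Some (k, r)\<close> indexes g_kr and \<open>None\<close> the stacked vector h.\<close>

definition gram_weight :: "nat \<Rightarrow> (nat \<times> nat) option \<Rightarrow> real" where
  "gram_weight d m = (case m of
     Some (k, r) \<Rightarrow> 1 - (if k = r div d then 1/2 else 0) - (if k = r mod d then 1/2 else 0)
   | None \<Rightarrow> 1/4)"

definition gram_vec :: "nat \<Rightarrow> complex mat \<Rightarrow> complex mat \<Rightarrow> (nat \<times> nat) option \<Rightarrow> nat \<Rightarrow> complex" where
  "gram_vec d X Y m I = (case m of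
     Some (k, r) \<Rightarrow> if I mod (d * d) = r then sel X Y (I div (d * d)) $$ (k, k) else 0
   | None \<Rightarrow> stack (sel X Y (I div (d * d))) $$ (I mod (d * d), 0))"

lemma gram_weight_nonneg: "0 \<le> gram_weight d m"
  unfolding gram_weight_def by (auto split: option.splits)

lemma sum_delta_product:
  fixes w :: "nat \<Rightarrow> complex"
  assumes "r < n"
  shows "(\<Sum>i<n. w i * (cnj (if r = i then a else 0) * (if s = i then b else 0))) =
    (if r = s then w r * (cnj a * b) else 0)"
proof -
  have "(\<Sum>i<n. w i * (cnj (if r = i then a else 0) * (if s = i then b else 0))) =
      (\<Sum>i<n. if i = r then (if r = s then w r * (cnj a * b) else 0) else 0)"
    by (intro sum.cong) auto
  also have "\<dots> = (if r = s then w r * (cnj a * b) else 0)"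
    using assms by simp
  finally show ?thesis .
qed

lemma sum_minus_half_deltas:
  fixes c :: "nat \<Rightarrow> complex"
  assumes "p < d" "q < d"
  shows "(\<Sum>k<d. complex_of_real (1 - (if k = p then 1/2 else 0) - (if k = q then 1/2 else 0)) * c k) =
    (\<Sum>k<d. c k) - 1/2 * c p - 1/2 * c q"
proof -
  have "(\<Sum>k<d. complex_of_real (1 - (if k = p then 1/2 else 0) - (if k = q then 1/2 else 0)) * c k) =
      (\<Sum>k<d. c k - (if k = p then 1/2 * c p else 0) - (if k = q then 1/2 * c q else 0))"
    by (intro sum.cong) auto
  also have "\<dots> = (\<Sum>k<d. c k) - 1/2 * c p - 1/2 * c q"
    using assms by (simp add: sum_subtractf)
  finally show ?thesis .
qed

context
  fixes d :: nat and X Y :: "complex mat"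
  assumes d: "0 < d"
    and X: "X \<in> carrier_mat d d" "diagonal_mat X"
    and Y: "Y \<in> carrier_mat d d" "diagonal_mat Y"
begin

lemma sel_carrier: "sel X Y a \<in> carrier_mat d d"
  using X Y by (simp add: sel_def)

lemma sel_diagonal: "diagonal_mat (sel X Y a)"
  using X Y by (simp add: sel_def)

lemmas sel_facts = sel_carrier sel_diagonal

lemma dim_sel [simp]: "dim_row (sel X Y a) = d" "dim_col (sel X Y a) = d"
  using sel_carrier by blast+

lemma index_H1:
  assumes "I < 2 * (d * d)" "J < 2 * (d * d)"
  shows "H1 d X Y $$ (I, J) = (if I mod (d * d) = J mod (d * d)
    then (\<Sum>k<d. diag_prod (sel X Y (I div (d * d))) (sel X Y (J div (d * d))) k) else 0)"
proof -
  have "I div (d * d) < 2" "J div (d * d) < 2"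
    using assms by (auto simp: less_mult_imp_div_less)
  then have "H1 d X Y $$ (I, J) = trace (adj (sel X Y (I div (d * d))) * sel X Y (J div (d * d))) *
      1\<^sub>m (d * d) $$ (I mod (d * d), J mod (d * d))"
    unfolding H1_def frob_sq_def using assms
    by (subst index_kron) (auto simp: index_mat2_sel[where h = "\<lambda>A B. trace (adj A * B)", simplified])
  then show ?thesis
    using d by (simp add: trace_adj_mult_diagonal[OF sel_facts sel_facts])
qed

lemma index_H2:
  assumes "I < 2 * (d * d)" "J < 2 * (d * d)"
  shows "H2 d X Y $$ (I, J) = (if I mod (d * d) = J mod (d * d)
    then diag_prod (sel X Y (I div (d * d))) (sel X Y (J div (d * d))) ((I mod (d * d)) div d) else 0)"
proof -
  have adj_mult: "adj (sel X Y a) * sel X Y b \<in> carrier_mat d d" for a b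
    using sel_carrier[of a] sel_carrier[of b] by (intro mult_carrier_mat) simp_all
  have blk: "blk (adj X * X) (adj X * Y) (adj Y * X) (adj Y * Y) \<in> carrier_mat (2 * d) (2 * d)"
    using blk_carrier_mat[OF adj_mult[of 0 0] adj_mult[of 1 1]] by (simp add: sel_def)
  have "I div d < 2 * d" "J div d < 2 * d"
    using assms by (simp_all add: less_mult_imp_div_less mult.assoc)
  then have "H2 d X Y $$ (I, J) = (adj (sel X Y (I div d div d)) * sel X Y (J div d div d)) $$
      ((I div d) mod d, (J div d) mod d) * 1\<^sub>m d $$ (I mod d, J mod d)"
    unfolding H2_def using assms d blk
    by (subst index_kron) (auto simp: index_blk_sel[where G = "\<lambda>A B. adj A * B", OF adj_mult] mult.assoc)
  also have "\<dots> = (if (I div d) mod d = (J div d) mod d \<and> I mod d = J mod d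
      then diag_prod (sel X Y (I div d div d)) (sel X Y (J div d div d)) ((I div d) mod d) else 0)"
    using d by (simp add: index_adj_mult_diagonal[OF sel_facts sel_facts])
  finally show ?thesis
    by (simp add: mod_square_div mod_square_eq_iff div_mult2_eq)
qed

lemma index_H3:
  assumes "I < 2 * (d * d)" "J < 2 * (d * d)"
  shows "H3 d X Y $$ (I, J) = (if I mod (d * d) = J mod (d * d)
    then diag_prod (sel X Y (I div (d * d))) (sel X Y (J div (d * d))) ((I mod (d * d)) mod d) else 0)"
proof -
  have kron_block: "kron (1\<^sub>m d) (cconj (sel X Y a) * transpose_mat (sel X Y b))
      \<in> carrier_mat (d * d) (d * d)" for a b
    using sel_carrier[of a] sel_carrier[of b] by (intro kron_carrier_mat mult_carrier_mat) simp_all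
  have q: "(I mod (d * d)) div d < d" "(J mod (d * d)) div d < d"
      "(I mod (d * d)) mod d < d" "(J mod (d * d)) mod d < d"
    using d by (simp_all add: less_mult_imp_div_less)
  have "H3 d X Y $$ (I, J) =
      kron (1\<^sub>m d) (cconj (sel X Y (I div (d * d))) * transpose_mat (sel X Y (J div (d * d))))
        $$ (I mod (d * d), J mod (d * d))"
    unfolding H3_def using assms
    by (subst index_blk_sel[where G = "\<lambda>A B. kron (1\<^sub>m d) (cconj A * transpose_mat B)", OF kron_block]) simp_all
  also have "\<dots> = 1\<^sub>m d $$ ((I mod (d * d)) div d, (J mod (d * d)) div d) *
      (cconj (sel X Y (I div (d * d))) * transpose_mat (sel X Y (J div (d * d))))
        $$ ((I mod (d * d)) mod d, (J mod (d * d)) mod d)"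
    using d sel_carrier by (subst index_kron) (auto simp: cconj_def)
  also have "\<dots> = (if (I mod (d * d)) div d = (J mod (d * d)) div d
        \<and> (I mod (d * d)) mod d = (J mod (d * d)) mod d
      then diag_prod (sel X Y (I div (d * d))) (sel X Y (J div (d * d))) ((I mod (d * d)) mod d) else 0)"
    unfolding index_one_mat(1)[OF q(1,2)] index_cconj_mult_transpose_diagonal[OF sel_facts sel_facts q(3,4)]
    by simp
  finally show ?thesis
    by (simp add: mod_square_div mod_square_mod mod_square_eq_iff)
qed

lemma index_H4:
  assumes "I < 2 * (d * d)" "J < 2 * (d * d)"
  shows "H4 X Y $$ (I, J) = cnj (stack (sel X Y (I div (d * d))) $$ (I mod (d * d), 0)) *
    stack (sel X Y (J div (d * d))) $$ (J mod (d * d), 0)"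
proof -
  have stack_outer: "cconj (stack (sel X Y a)) * transpose_mat (stack (sel X Y b))
      \<in> carrier_mat (d * d) (d * d)" for a b
    by (intro carrier_matI) (simp_all add: cconj_def)
  have "I mod (d * d) < d * d" "J mod (d * d) < d * d"
    using d by simp_all
  then show ?thesis
    unfolding H4_def using assms
    by (subst index_blk_sel[where G = "\<lambda>A B. cconj (stack A) * transpose_mat (stack B)", OF stack_outer])
      (simp_all add: index_cconj_mult_transpose_col)
qed

lemma H3_carrier: "H3 d X Y \<in> carrier_mat (2 * (d * d)) (2 * (d * d))"
  unfolding H3_def using sel_carrier[of 0] sel_carrier[of 1]
  by (intro blk_carrier_mat kron_carrier_mat mult_carrier_mat one_carrier_mat) (simp_all add: sel_def)

lemma H4_carrier: "H4 X Y \<in> carrier_mat (2 * (d * d)) (2 * (d * d))"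
  unfolding H4_def using X Y
  by (intro blk_carrier_mat carrier_matI) (simp_all add: cconj_def)

lemma Hmat_carrier: "Hmat d X Y \<in> carrier_mat (2 * (d * d)) (2 * (d * d))"
  using H4_carrier unfolding Hmat_def by (intro carrier_matI) auto

lemma index_Hmat:
  assumes "I < 2 * (d * d)" "J < 2 * (d * d)"
  shows "Hmat d X Y $$ (I, J) =
    H1 d X Y $$ (I, J) - 1/2 * (H2 d X Y $$ (I, J) + H3 d X Y $$ (I, J)) + 1/4 * H4 X Y $$ (I, J)"
  using assms H3_carrier H4_carrier unfolding Hmat_def by auto

lemma Hmat_gram:
  assumes "I < 2 * (d * d)" "J < 2 * (d * d)"
  shows "Hmat d X Y $$ (I, J) = (\<Sum>m\<in>insert None (Some ` ({..<d} \<times> {..<d * d})).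
    of_real (gram_weight d m) * (cnj (gram_vec d X Y m I) * gram_vec d X Y m J))"
proof -
  define r where "r = I mod (d * d)"
  define c where "c = diag_prod (sel X Y (I div (d * d))) (sel X Y (J div (d * d)))"
  have r: "r < d * d" "r div d < d" "r mod d < d"
    using d by (simp_all add: r_def less_mult_imp_div_less)
  have weighted: "(\<Sum>k<d. of_real (gram_weight d (Some (k, r))) * c k) =
      (\<Sum>k<d. c k) - 1/2 * c (r div d) - 1/2 * c (r mod d)"
    unfolding gram_weight_def using sum_minus_half_deltas[OF r(2,3), of c] by simp
  have "(\<Sum>m\<in>Some ` ({..<d} \<times> {..<d * d}).
        of_real (gram_weight d m) * (cnj (gram_vec d X Y m I) * gram_vec d X Y m J)) =
      (\<Sum>k<d. \<Sum>i<d * d. of_real (gram_weight d (Some (k, i))) *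
          (cnj (gram_vec d X Y (Some (k, i)) I) * gram_vec d X Y (Some (k, i)) J))"
    by (simp add: sum.reindex sum.cartesian_product)
  also have "\<dots> = (\<Sum>k<d. if r = J mod (d * d) then of_real (gram_weight d (Some (k, r))) * c k else 0)"
    unfolding gram_vec_def c_def diag_prod_def r_def[symmetric] using sum_delta_product[OF r(1)] by simp
  also have "\<dots> = (if r = J mod (d * d) then (\<Sum>k<d. of_real (gram_weight d (Some (k, r))) * c k) else 0)"
    by simp
  also have "\<dots> = (if r = J mod (d * d) then (\<Sum>k<d. c k) - 1/2 * c (r div d) - 1/2 * c (r mod d) else 0)"
    unfolding weighted ..
  finally show ?thesis
    unfolding index_Hmat[OF assms] index_H1[OF assms] index_H2[OF assms] index_H3[OF assms] index_H4[OF assms]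
    by (simp add: gram_weight_def gram_vec_def c_def r_def algebra_simps)
qed

end

theorem corollary5p2:
  fixes d :: nat and X Y :: "complex mat"
  assumes "d \<ge> 3"
    and "X \<in> carrier_mat d d" and "Y \<in> carrier_mat d d"
    and "diagonal_mat X" and "diagonal_mat Y"
  shows "psd (Hmat d X Y) \<and> Hmat d X Y \<in> carrier_mat (2 * d^2) (2 * d^2)"
proof -
  have d: "0 < d"
    using assms(1) by simp
  note setting = d assms(2,4,3,5)
  have "psd (Hmat d X Y)"
    using Hmat_carrier[OF setting] gram_weight_nonneg Hmat_gram[OF setting]
    by (rule psd_weighted_gram)
  then show ?thesis
    using Hmat_carrier[OF setting] by (simp add: power2_eq_square)
qed

end
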